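(* Let $M\in\mathbb{R}^{d\times d}$ be symmetric, let $f:\mathbb{R}^d\to\mathbb{R}$ be differentiable and $M$-matrix-smooth, and let $\bar z$ be a stationary point of $f$. Let $s$ be standardized on $\mathbb{R}^d$ with $\mathbb{E}[\mathsf{u}_i^4]=\kappa<\infty$, and for $w=(m,C)$ let $\mathsf{g}=\nabla_w f(T_w(\mathsf{u}))$ with $\mathsf{u}\sim s$. Then \[ \mathbb{E}\|\mathsf{g}\|_2^2\le (d+1)\|M(m-\bar z)\|_2^2+(d+\kappa)\|MC\|_F^2 . \] Moreover, the bound is unimprovable: for every symmetric $M$ and every $\bar z$, the function $f(z)=\frac12(z-\bar z)^\top M(z-\bar z)$ satisfies the hypotheses and attains equality for every $w=(m,C)$.
   Context: For a symmetric matrix $M$, $f$ is $M$-matrix-smooth if $\|\nabla f(y)-\nabla f(z)\|_2\le\|M(y-z)\|_2$ for all $y,z\in\mathbb{R}^d$. $T_w(u)=Cu+m$ for $w=(m,C)$, $m\in\mathbb{R}^d$, $C\in\mathbb{R}^{d\times d}$, with $w$ regarded as the vector of all $d+d^2$ entries; $\nabla_w$ is the gradient with respect to all these entries and its norm is the Euclidean norm over all entries. A distribution $s$ on $\mathbb{R}^d$ is standardized if for $\mathsf{u}\sim s$ the components are i.i.d. with $\mathbb{E}\mathsf{u}_1=\mathbb{E}\mathsf{u}_1^3=0$ and $\mathrm{Var}(\mathsf{u}_1)=1$. $\|\cdot\|_F$ is the Frobenius norm. *)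

theory Defs
  imports "HOL-Analysis.Analysis" "HOL-Probability.Probability"
begin

text \<open>Gradient of a real-valued function on a Euclidean space, taken coordinatewise
  with respect to the standard basis (for \<open>real^'n\<close> these are the d entries,
  for \<open>real^'n \<times> real^'n^'n\<close> these are all d + d^2 entries of w = (m,C)).\<close>
definition grad :: "('a::euclidean_space \<Rightarrow> real) \<Rightarrow> 'a \<Rightarrow> 'a" where
  "grad F x = (\<Sum>b\<in>Basis. frechet_derivative F (at x) b *\<^sub>R b)"

definition sym_mat :: "real^'n^'n \<Rightarrow> bool" where
  "sym_mat M \<longleftrightarrow> transpose M = M"

definition matrix_smooth :: "real^'n^'n \<Rightarrow> (real^'n \<Rightarrow> real) \<Rightarrow> bool" where
  "matrix_smooth M f \<longleftrightarrow> (\<forall>y z. norm (grad f y - grad f z) \<le> norm (M *v (y - z)))"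

definition Tw :: "(real^'n) \<times> (real^'n^'n) \<Rightarrow> real^'n \<Rightarrow> real^'n" where
  "Tw w u = snd w *v u + fst w"

definition grad_w :: "(real^'n \<Rightarrow> real) \<Rightarrow> real^'n \<Rightarrow> (real^'n) \<times> (real^'n^'n) \<Rightarrow> (real^'n) \<times> (real^'n^'n)" where
  "grad_w f u w = grad (\<lambda>v. f (Tw v u)) w"

definition frob_norm :: "real^'n^'n \<Rightarrow> real" where
  "frob_norm A = sqrt (\<Sum>i\<in>UNIV. \<Sum>j\<in>UNIV. (A $ i $ j)\<^sup>2)"

definition standardized :: "(real^'n) measure \<Rightarrow> bool" where
  "standardized s \<longleftrightarrow> prob_space s \<and> sets s = sets borel \<and>
     prob_space.indep_vars s (\<lambda>_. borel) (\<lambda>i u. u $ i) UNIV \<and>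
     (\<forall>i j. distr s borel (\<lambda>u. u $ i) = distr s borel (\<lambda>u. u $ j)) \<and>
     (\<forall>i. integrable s (\<lambda>u. u $ i) \<and> integrable s (\<lambda>u. (u $ i)^2) \<and> integrable s (\<lambda>u. (u $ i)^3) \<and>
          (\<integral>u. u $ i \<partial>s) = 0 \<and> (\<integral>u. (u $ i)^3 \<partial>s) = 0 \<and>
          prob_space.variance s (\<lambda>u. u $ i) = 1)"

definition fourth_moment :: "(real^'n) measure \<Rightarrow> real \<Rightarrow> bool" where
  "fourth_moment s \<kappa> \<longleftrightarrow> (\<forall>i. integrable s (\<lambda>u. (u $ i)^4) \<and> (\<integral>u. (u $ i)^4 \<partial>s) = \<kappa>)"

end

theory Submission
  imports Defs
begin

text \<open>With \<open>g = \<nabla>f(Cu + m)\<close>, the chain rule gives \<open>\<nabla>\<^sub>w f(T\<^sub>w u) = (g, g u\<^sup>T)\<close>, whose squared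
  norm is \<open>\<parallel>g\<parallel>\<^sup>2 (1 + \<parallel>u\<parallel>\<^sup>2)\<close>. Smoothness and stationarity of \<open>zbar\<close> bound \<open>\<parallel>g\<parallel>\<close> by
  \<open>\<parallel>a + B u\<parallel>\<close> with \<open>a = M (m - zbar)\<close> and \<open>B = M C\<close>. For standardized \<open>u\<close>, expanding
  \<open>\<parallel>a + B u\<parallel>\<^sup>2 (1 + \<parallel>u\<parallel>\<^sup>2)\<close> into monomials of degree at most four and using independence
  together with the vanishing odd moments gives exactly
  \<open>(d + 1) \<parallel>a\<parallel>\<^sup>2 + (d + \<kappa>) \<parallel>B\<parallel>\<^sub>F\<^sup>2\<close>. For the quadratic \<open>f\<close> the gradient is \<open>M (z - zbar)\<close>, so the
  only inequality in this chain is an equality.\<close>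

lemma linear_eq_inner_Basis_sum:
  fixes L :: "'a::euclidean_space \<Rightarrow> real"
  assumes "linear L"
  shows "L h = (\<Sum>b\<in>Basis. L b *\<^sub>R b) \<bullet> h"
proof -
  have "L h = L (\<Sum>b\<in>Basis. (h \<bullet> b) *\<^sub>R b)" by (simp add: euclidean_representation)
  also have "\<dots> = (\<Sum>b\<in>Basis. (h \<bullet> b) * L b)"
    using assms by (simp add: linear_sum linear_scale)
  also have "\<dots> = (\<Sum>b\<in>Basis. L b *\<^sub>R b) \<bullet> h"
    unfolding inner_sum_left by (simp add: mult.commute inner_commute)
  finally show ?thesis .
qed

lemma frechet_derivative_eq_inner_grad:
  assumes "F differentiable (at x)"
  shows "frechet_derivative F (at x) h = grad F x \<bullet> h"
proof -
  have "linear (frechet_derivative F (at x))"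
    using assms frechet_derivative_works has_derivative_linear by blast
  then show ?thesis unfolding grad_def by (rule linear_eq_inner_Basis_sum)
qed

lemma grad_eqI:
  assumes "(F has_derivative F') (at x)" and "\<And>h. F' h = r \<bullet> h"
  shows "grad F x = r"
proof -
  have "frechet_derivative F (at x) = F'" using frechet_derivative_at[OF assms(1)] by simp
  then show ?thesis unfolding grad_def using assms(2) by (simp add: euclidean_representation)
qed

lemma linear_Tw: "linear (\<lambda>w. Tw w u)"
  unfolding Tw_def
  by (rule linearI)
    (auto simp: matrix_vector_mult_def vec_eq_iff sum.distrib algebra_simps sum_distrib_left)

lemma grad_w_eq:
  fixes f :: "real^'n \<Rightarrow> real"
  assumes "\<forall>y. f differentiable (at y)"
  shows "grad_w f u w = (grad f (Tw w u), \<chi> i j. grad f (Tw w u) $ i * u $ j)"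
proof -
  let ?z = "Tw w u"
  let ?g = "grad f ?z"
  have "(f has_derivative frechet_derivative f (at ?z)) (at ?z)"
    using assms frechet_derivative_works by blast
  moreover have "((\<lambda>v. Tw v u) has_derivative (\<lambda>v. Tw v u)) (at w)"
    using linear_Tw bounded_linear_imp_has_derivative linear_conv_bounded_linear by blast
  ultimately have chain: "((\<lambda>v. f (Tw v u)) has_derivative
      (\<lambda>v. frechet_derivative f (at ?z) (Tw v u))) (at w)"
    using diff_chain_at by (auto simp: o_def)
  show ?thesis unfolding grad_w_def
  proof (rule grad_eqI[OF chain])
    fix h :: "(real^'n) \<times> (real^'n^'n)"
    obtain dm dC where h: "h = (dm, dC)" by (cases h)
    have "frechet_derivative f (at ?z) (Tw h u) = ?g \<bullet> (dC *v u + dm)"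
      using frechet_derivative_eq_inner_grad[of f ?z "Tw h u"] assms h by (simp add: Tw_def)
    also have "\<dots> = ?g \<bullet> dm + (\<chi> i j. ?g $ i * u $ j) \<bullet> dC"
      by (simp add: inner_add_right inner_vec_def matrix_vector_mult_def sum_distrib_left
          algebra_simps sum.distrib)
    finally show "frechet_derivative f (at ?z) (Tw h u) = (?g, \<chi> i j. ?g $ i * u $ j) \<bullet> h"
      using h by simp
  qed
qed

lemma norm_vec_sq: "(norm (x::('a::real_inner)^'n))\<^sup>2 = (\<Sum>i\<in>UNIV. (norm (x $ i))\<^sup>2)"
  by (simp only: power2_norm_eq_inner inner_vec_def)

lemma norm_real_vec_sq: "(norm (x::real^'n))\<^sup>2 = (\<Sum>i\<in>UNIV. (x $ i)\<^sup>2)"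
  by (simp add: norm_vec_sq)

lemma frob_norm_sq: "(frob_norm B)\<^sup>2 = (\<Sum>i\<in>UNIV. \<Sum>j\<in>UNIV. (B $ i $ j)\<^sup>2)"
  unfolding frob_norm_def by (simp add: sum_nonneg)

lemma norm_Pair_outer_sq:
  fixes g u :: "real^'n"
  shows "(norm (g, \<chi> i j. g $ i * u $ j))\<^sup>2 = (norm g)\<^sup>2 * (1 + (norm u)\<^sup>2)"
proof -
  have "(norm (\<chi> i j. g $ i * u $ j))\<^sup>2 = (norm g)\<^sup>2 * (norm u)\<^sup>2"
    by (simp add: norm_vec_sq norm_real_vec_sq power_mult_distrib sum_product)
  then show ?thesis by (simp add: norm_Pair algebra_simps)
qed

lemma matrix_vector_Tw_diff:
  "M *v (Tw (m, C) u - z) = M *v (m - z) + (M ** C) *v u"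
proof -
  have "Tw (m, C) u - z = (m - z) + C *v u" by (simp add: Tw_def algebra_simps)
  then show ?thesis by (simp only: matrix_vector_right_distrib matrix_vector_mul_assoc)
qed

lemma sym_mat_inner_commute:
  assumes "sym_mat (M::real^'n^'n)"
  shows "x \<bullet> (M *v y) = (M *v x) \<bullet> y"
proof -
  have "transpose M *v x = M *v x" using assms unfolding sym_mat_def by simp
  then show ?thesis by (metis dot_lmul_matrix inner_commute vector_transpose_matrix)
qed

lemma has_derivative_quadratic_form:
  assumes "sym_mat (M::real^'n^'n)"
  shows "((\<lambda>z. (1/2) * ((z - z0) \<bullet> (M *v (z - z0)))) has_derivative
          (\<lambda>h. (M *v (z - z0)) \<bullet> h)) (at z)"
proof -
  have "((\<lambda>z. z - z0) has_derivative (\<lambda>h. h)) (at z)"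
    by (auto intro!: derivative_eq_intros)
  then have deriv: "((\<lambda>z. (1/2) * ((z - z0) \<bullet> (M *v (z - z0)))) has_derivative
      (\<lambda>h. (1/2) * ((z - z0) \<bullet> (M *v h) + h \<bullet> (M *v (z - z0))))) (at z)"
    by (intro has_derivative_mult_right has_derivative_inner
        bounded_linear.has_derivative[OF matrix_vector_mul_bounded_linear])
  have "(M *v h) \<bullet> (z - z0) = h \<bullet> (M *v (z - z0))" for h
    using sym_mat_inner_commute[OF assms, of h "z - z0"] by simp
  then show ?thesis
    by (intro has_derivative_eq_rhs[OF deriv]) (auto simp: inner_commute)
qed

lemma grad_quadratic_form:
  assumes "sym_mat (M::real^'n^'n)"
  shows "grad (\<lambda>z. (1/2) * ((z - z0) \<bullet> (M *v (z - z0)))) z = M *v (z - z0)"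
  by (rule grad_eqI[OF has_derivative_quadratic_form[OF assms]]) simp

text \<open>\<open>std_moment \<kappa> n\<close> is \<open>\<EE>[u\<^sub>i\<^sup>n]\<close> for \<open>n \<le> 4\<close>; the value for larger \<open>n\<close> is never used.\<close>
definition std_moment :: "real \<Rightarrow> nat \<Rightarrow> real" where
  "std_moment \<kappa> n = (if n = 0 \<or> n = 2 then 1 else if n = 4 then \<kappa> else 0)"

lemma has_bochner_integral_standardized_power:
  fixes s :: "(real^'n) measure"
  assumes st: "standardized s" and fm: "fourth_moment s \<kappa>" and "n \<le> 4"
  shows "has_bochner_integral s (\<lambda>u. (u $ i)^n) (std_moment \<kappa> n)"
proof -
  have ps: "prob_space s" and var: "prob_space.variance s (\<lambda>u. u $ i) = 1"
    and "integrable s (\<lambda>u. u $ i)" "integrable s (\<lambda>u. (u $ i)^2)" "integrable s (\<lambda>u. (u $ i)^3)"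
    and e1: "(\<integral>u. u $ i \<partial>s) = 0" and "(\<integral>u. (u $ i)^3 \<partial>s) = 0"
    using st unfolding standardized_def by blast+
  moreover have "integrable s (\<lambda>u. (u $ i)^4)" "(\<integral>u. (u $ i)^4 \<partial>s) = \<kappa>"
    using fm by (auto simp: fourth_moment_def)
  moreover have "(\<integral>u. (u $ i)^2 \<partial>s) = 1" using var e1 by simp
  moreover have "integrable s (\<lambda>_. 1::real)" "(\<integral>u. 1 \<partial>s) = (1::real)"
    using ps prob_space.finite_measure[OF ps]
    by (auto simp: prob_space.prob_space finite_measure.integrable_const)
  moreover have "n = 0 \<or> n = 1 \<or> n = 2 \<or> n = 3 \<or> n = 4" using \<open>n \<le> 4\<close> by auto
  ultimately show ?thesis by (auto simp: has_bochner_integral_iff std_moment_def)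
qed

lemma has_bochner_integral_standardized_monomial:
  fixes s :: "(real^'n) measure"
  assumes st: "standardized s" and fm: "fourth_moment s \<kappa>" and p: "\<And>i. p i \<le> 4"
  shows "has_bochner_integral s (\<lambda>u. \<Prod>i\<in>UNIV. (u $ i)^(p i)) (\<Prod>i\<in>UNIV. std_moment \<kappa> (p i))"
proof -
  have ps: "prob_space s" and ind: "prob_space.indep_vars s (\<lambda>_. borel) (\<lambda>i u. u $ i) UNIV"
    using st by (simp_all add: standardized_def)
  have ind_pow: "prob_space.indep_vars s (\<lambda>_. borel) (\<lambda>i u. (u $ i)^(p i)) UNIV"
    using prob_space.indep_vars_compose2[OF ps ind, of "\<lambda>i x. x^(p i)" "\<lambda>_. borel"] by simp
  have "has_bochner_integral s (\<lambda>u. (u $ i)^(p i)) (std_moment \<kappa> (p i))" for i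
    using has_bochner_integral_standardized_power[OF st fm p] .
  then show ?thesis
    using prob_space.indep_vars_lebesgue_integral[OF ps finite_class.finite_UNIV ind_pow]
      prob_space.indep_vars_integrable[OF ps finite_class.finite_UNIV ind_pow]
    by (auto simp: has_bochner_integral_iff)
qed

lemma prod_power_if_eq:
  fixes f :: "'a::finite \<Rightarrow> 'b::comm_monoid_mult"
  shows "(\<Prod>i\<in>UNIV. f i ^ (if i = j then a else 0)) = f j ^ a"
proof -
  have "(\<lambda>i. f i ^ (if i = j then a else 0)) = (\<lambda>i. if i = j then f j ^ a else 1)" by auto
  then show ?thesis by (simp only:) simp
qed

lemma has_bochner_integral_standardized_monomial3:
  fixes s :: "(real^'n) measure" and j l k :: 'n
  assumes st: "standardized s" and fm: "fourth_moment s \<kappa>" and "a + b + c \<le> 4"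
  defines "p \<equiv> \<lambda>i. (if i = j then a else 0) + (if i = l then b else 0) + (if i = k then c else 0)"
  shows "has_bochner_integral s (\<lambda>u. (u $ j)^a * (u $ l)^b * (u $ k)^c)
           (\<Prod>i\<in>{j,l,k}. std_moment \<kappa> (p i))"
proof -
  have "p i \<le> 4" for i using \<open>a + b + c \<le> 4\<close> by (auto simp: p_def)
  then have monomial: "has_bochner_integral s (\<lambda>u. \<Prod>i\<in>UNIV. (u $ i)^(p i))
      (\<Prod>i\<in>UNIV. std_moment \<kappa> (p i))"
    by (rule has_bochner_integral_standardized_monomial[OF st fm])
  have "(\<Prod>i\<in>UNIV. (u $ i)^(p i)) = (u $ j)^a * (u $ l)^b * (u $ k)^c" for u :: "real^'n"
    unfolding p_def power_add prod.distrib
    by (simp add: prod_power_if_eq[of "vec_nth u"])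
  moreover have "(\<Prod>i\<in>UNIV. std_moment \<kappa> (p i)) = (\<Prod>i\<in>{j,l,k}. std_moment \<kappa> (p i))"
    by (rule prod.mono_neutral_right) (auto simp: p_def std_moment_def)
  ultimately show ?thesis using monomial by simp
qed

lemma norm_affine_sq_mult_expand:
  fixes a u :: "real^'n" and B :: "real^'n^'n" and x :: real
  shows "(norm (a + B *v u))\<^sup>2 * x = (\<Sum>i\<in>UNIV. (a $ i)\<^sup>2 * x
      + 2 * a $ i * (\<Sum>j\<in>UNIV. B $ i $ j * (u $ j * x))
      + (\<Sum>j\<in>UNIV. \<Sum>l\<in>UNIV. B $ i $ j * B $ i $ l * (u $ j * u $ l * x)))"
proof -
  have "(norm (a + B *v u))\<^sup>2 * x = (\<Sum>i\<in>UNIV. (a $ i + (\<Sum>j\<in>UNIV. B $ i $ j * u $ j))\<^sup>2 * x)"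
    by (simp add: norm_real_vec_sq matrix_vector_mult_def sum_distrib_right)
  also have "\<dots> = (\<Sum>i\<in>UNIV. (a $ i)\<^sup>2 * x
      + 2 * a $ i * (\<Sum>j\<in>UNIV. B $ i $ j * (u $ j * x))
      + (\<Sum>j\<in>UNIV. \<Sum>l\<in>UNIV. B $ i $ j * B $ i $ l * (u $ j * u $ l * x)))"
  proof (rule sum.cong[OF refl])
    fix i
    let ?S = "\<Sum>j\<in>UNIV. B $ i $ j * u $ j"
    have "(a $ i + ?S)\<^sup>2 * x = (a $ i)\<^sup>2 * x + 2 * a $ i * (?S * x) + (?S * ?S) * x"
      by (simp add: power2_eq_square algebra_simps)
    then show "(a $ i + ?S)\<^sup>2 * x = (a $ i)\<^sup>2 * x
      + 2 * a $ i * (\<Sum>j\<in>UNIV. B $ i $ j * (u $ j * x))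
      + (\<Sum>j\<in>UNIV. \<Sum>l\<in>UNIV. B $ i $ j * B $ i $ l * (u $ j * u $ l * x))"
      unfolding sum_product
      by (simp add: sum_distrib_right sum_distrib_left mult.commute mult.left_commute)
  qed
  finally show ?thesis .
qed

lemma has_bochner_integral_norm_affine_sq_mult:
  fixes s :: "(real^'n) measure" and a :: "real^'n" and B :: "real^'n^'n"
  assumes "has_bochner_integral s v c0"
    and "\<And>j. has_bochner_integral s (\<lambda>u. u $ j * v u) 0"
    and "\<And>j l. has_bochner_integral s (\<lambda>u. u $ j * u $ l * v u) (if j = l then c j else 0)"
  shows "has_bochner_integral s (\<lambda>u. (norm (a + B *v u))\<^sup>2 * v u)
           (c0 * (norm a)\<^sup>2 + (\<Sum>i\<in>UNIV. \<Sum>j\<in>UNIV. (B $ i $ j)\<^sup>2 * c j))"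
proof -
  have "has_bochner_integral s (\<lambda>u. (norm (a + B *v u))\<^sup>2 * v u)
      (\<Sum>i\<in>UNIV. (a $ i)\<^sup>2 * c0 + 2 * a $ i * (\<Sum>j\<in>UNIV. B $ i $ j * 0)
        + (\<Sum>j\<in>UNIV. \<Sum>l\<in>UNIV. B $ i $ j * B $ i $ l * (if j = l then c j else 0)))"
    unfolding norm_affine_sq_mult_expand
    using assms by (intro has_bochner_integral_sum has_bochner_integral_add
        has_bochner_integral_mult_right) auto
  moreover have "(\<Sum>l\<in>UNIV. B $ i $ j * B $ i $ l * (if j = l then c j else 0))
      = (B $ i $ j)\<^sup>2 * c j" for i j
    by (simp add: power2_eq_square if_distrib[of "\<lambda>x. _ * x"] cong: if_cong)
  ultimately show ?thesis
    by (simp add: sum.distrib norm_real_vec_sq sum_distrib_left mult.commute)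
qed

lemma sum_if_eq_const:
  "(\<Sum>k\<in>(UNIV::'n::finite set). if j = k then \<kappa> else 1) = real CARD('n) + \<kappa> - 1"
proof -
  have "(\<Sum>k\<in>(UNIV::'n set). if j = k then \<kappa> else 1)
      = (\<Sum>k\<in>(UNIV::'n set). 1 + (if j = k then \<kappa> - 1 else 0))"
    by (rule sum.cong) auto
  then show ?thesis by (simp add: sum.distrib)
qed

lemma has_bochner_integral_standardized_norm_affine_sq:
  fixes s :: "(real^'n) measure" and a :: "real^'n" and B :: "real^'n^'n"
  assumes st: "standardized s" and fm: "fourth_moment s \<kappa>"
  shows "has_bochner_integral s (\<lambda>u. (norm (a + B *v u))\<^sup>2) ((norm a)\<^sup>2 + (frob_norm B)\<^sup>2)"
proof -
  note monomial = has_bochner_integral_standardized_monomial3[OF st fm]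
  have "has_bochner_integral s (\<lambda>u. (norm (a + B *v u))\<^sup>2 * 1)
      (1 * (norm a)\<^sup>2 + (\<Sum>i\<in>UNIV. \<Sum>j\<in>UNIV. (B $ i $ j)\<^sup>2 * 1))"
  proof (rule has_bochner_integral_norm_affine_sq_mult)
    fix j l
    show "has_bochner_integral s (\<lambda>_. 1::real) 1"
      using monomial[of 0 0 0 j j j] by (simp add: std_moment_def)
    show "has_bochner_integral s (\<lambda>u. u $ j * 1) 0"
      using monomial[of 1 0 0 j j j] by (simp add: std_moment_def)
    show "has_bochner_integral s (\<lambda>u. u $ j * u $ l * 1) (if j = l then 1 else 0)"
      using monomial[of 1 1 0 j l j] by (cases "j = l") (auto simp: std_moment_def insert_absorb)
  qed
  then show ?thesis by (simp add: frob_norm_sq)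
qed

lemma has_bochner_integral_standardized_norm_affine_sq_mult_sq:
  fixes s :: "(real^'n) measure" and a :: "real^'n" and B :: "real^'n^'n"
  assumes st: "standardized s" and fm: "fourth_moment s \<kappa>"
  shows "has_bochner_integral s (\<lambda>u. (norm (a + B *v u))\<^sup>2 * (u $ k)\<^sup>2)
      ((norm a)\<^sup>2 + (\<Sum>i\<in>UNIV. \<Sum>j\<in>UNIV. (B $ i $ j)\<^sup>2 * (if j = k then \<kappa> else 1)))"
proof -
  note monomial = has_bochner_integral_standardized_monomial3[OF st fm]
  have "has_bochner_integral s (\<lambda>u. (norm (a + B *v u))\<^sup>2 * (u $ k)\<^sup>2)
      (1 * (norm a)\<^sup>2 + (\<Sum>i\<in>UNIV. \<Sum>j\<in>UNIV. (B $ i $ j)\<^sup>2 * (if j = k then \<kappa> else 1)))"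
  proof (rule has_bochner_integral_norm_affine_sq_mult)
    fix j l
    show "has_bochner_integral s (\<lambda>u. (u $ k)\<^sup>2) 1"
      using monomial[of 0 0 2 k k k] by (simp add: std_moment_def)
    show "has_bochner_integral s (\<lambda>u. u $ j * (u $ k)\<^sup>2) 0"
      using monomial[of 1 0 2 j j k] by (cases "j = k") (auto simp: std_moment_def)
    show "has_bochner_integral s (\<lambda>u. u $ j * u $ l * (u $ k)\<^sup>2)
        (if j = l then (if j = k then \<kappa> else 1) else 0)"
      using monomial[of 1 1 2 j l k]
      by (cases "j = l"; cases "j = k"; cases "l = k") (auto simp: std_moment_def insert_absorb)
  qed
  then show ?thesis by simp
qed

lemma has_bochner_integral_standardized_norm_affine_sq_weight:
  fixes s :: "(real^'n) measure" and a :: "real^'n" and B :: "real^'n^'n"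
  assumes st: "standardized s" and fm: "fourth_moment s \<kappa>"
  shows "has_bochner_integral s (\<lambda>u. (norm (a + B *v u))\<^sup>2 * (1 + (norm u)\<^sup>2))
    ((real CARD('n) + 1) * (norm a)\<^sup>2 + (real CARD('n) + \<kappa>) * (frob_norm B)\<^sup>2)"
proof -
  have "(\<Sum>k\<in>UNIV. \<Sum>i\<in>UNIV. \<Sum>j\<in>UNIV. (B $ i $ j)\<^sup>2 * (if j = k then \<kappa> else 1))
      = (\<Sum>i\<in>UNIV. \<Sum>j\<in>UNIV. \<Sum>k\<in>UNIV. (B $ i $ j)\<^sup>2 * (if j = k then \<kappa> else 1))"
    by (subst sum.swap) (rule sum.cong[OF refl], rule sum.swap)
  also have "\<dots> = (frob_norm B)\<^sup>2 * (real CARD('n) + \<kappa> - 1)"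
    by (simp add: frob_norm_sq sum_distrib_left[symmetric] sum_if_eq_const sum_distrib_right)
  finally have value_eq: "((norm a)\<^sup>2 + (frob_norm B)\<^sup>2)
      + (\<Sum>k\<in>UNIV. (norm a)\<^sup>2
          + (\<Sum>i\<in>UNIV. \<Sum>j\<in>UNIV. (B $ i $ j)\<^sup>2 * (if j = k then \<kappa> else 1)))
      = (real CARD('n) + 1) * (norm a)\<^sup>2 + (real CARD('n) + \<kappa>) * (frob_norm B)\<^sup>2"
    unfolding sum.distrib by (simp add: algebra_simps)
  have integrand_eq: "(\<lambda>u. (norm (a + B *v u))\<^sup>2 * (1 + (norm u)\<^sup>2))
      = (\<lambda>u. (norm (a + B *v u))\<^sup>2 + (\<Sum>k\<in>UNIV. (norm (a + B *v u))\<^sup>2 * (u $ k)\<^sup>2))"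
    by (simp only: norm_real_vec_sq[of u for u] distrib_left sum_distrib_left mult_1_right)
  show ?thesis
    unfolding integrand_eq value_eq[symmetric]
    by (intro has_bochner_integral_add has_bochner_integral_sum
        has_bochner_integral_standardized_norm_affine_sq[OF st fm]
        has_bochner_integral_standardized_norm_affine_sq_mult_sq[OF st fm])
qed

lemma nn_integral_standardized_norm_affine_sq_weight:
  fixes s :: "(real^'n) measure" and a :: "real^'n" and B :: "real^'n^'n"
  assumes "standardized s" and "fourth_moment s \<kappa>"
  shows "(\<integral>\<^sup>+ u. ennreal ((norm (a + B *v u))\<^sup>2 * (1 + (norm u)\<^sup>2)) \<partial>s)
    = ennreal ((real CARD('n) + 1) * (norm a)\<^sup>2 + (real CARD('n) + \<kappa>) * (frob_norm B)\<^sup>2)"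
  using has_bochner_integral_standardized_norm_affine_sq_weight[OF assms, of a B]
  by (subst nn_integral_eq_integral) (auto simp: has_bochner_integral_iff)

lemma norm_grad_w_sq:
  assumes "\<forall>y. f differentiable (at y)"
  shows "(norm (grad_w f u (m, C)))\<^sup>2 = (norm (grad f (Tw (m, C) u)))\<^sup>2 * (1 + (norm u)\<^sup>2)"
  unfolding grad_w_eq[OF assms] norm_Pair_outer_sq ..

lemma nn_integral_grad_w_sq_le:
  fixes M :: "real^'n^'n" and f :: "real^'n \<Rightarrow> real"
  assumes "\<forall>y. f differentiable (at y)" and "matrix_smooth M f" and "grad f zbar = 0"
    and "standardized s" and "fourth_moment s \<kappa>"
  shows "(\<integral>\<^sup>+ u. ennreal ((norm (grad_w f u (m, C)))\<^sup>2) \<partial>s)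
           \<le> ennreal ((real CARD('n) + 1) * (norm (M *v (m - zbar)))\<^sup>2
                     + (real CARD('n) + \<kappa>) * (frob_norm (M ** C))\<^sup>2)"
proof -
  have "norm (grad f (Tw (m, C) u)) \<le> norm (M *v (m - zbar) + (M ** C) *v u)" for u
    using assms(2,3) unfolding matrix_smooth_def matrix_vector_Tw_diff[symmetric]
    by (metis diff_zero)
  then have "(norm (grad_w f u (m, C)))\<^sup>2
      \<le> (norm (M *v (m - zbar) + (M ** C) *v u))\<^sup>2 * (1 + (norm u)\<^sup>2)" for u
    unfolding norm_grad_w_sq[OF assms(1)]
    by (intro mult_right_mono power_mono) auto
  then have "(\<integral>\<^sup>+ u. ennreal ((norm (grad_w f u (m, C)))\<^sup>2) \<partial>s)
      \<le> (\<integral>\<^sup>+ u. ennreal ((norm (M *v (m - zbar) + (M ** C) *v u))\<^sup>2 * (1 + (norm u)\<^sup>2)) \<partial>s)"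
    by (intro nn_integral_mono ennreal_leI)
  then show ?thesis
    unfolding nn_integral_standardized_norm_affine_sq_weight[OF assms(4,5)] .
qed

lemma quadratic_form_attains_bound:
  fixes M :: "real^'n^'n" and zbar :: "real^'n"
  assumes "sym_mat M" and "standardized s" and "fourth_moment s \<kappa>"
  defines "q \<equiv> \<lambda>z. (1/2) * ((z - zbar) \<bullet> (M *v (z - zbar)))"
  shows "(\<integral>\<^sup>+ u. ennreal ((norm (grad_w q u (m, C)))\<^sup>2) \<partial>s)
           = ennreal ((real CARD('n) + 1) * (norm (M *v (m - zbar)))\<^sup>2
                     + (real CARD('n) + \<kappa>) * (frob_norm (M ** C))\<^sup>2)"
proof -
  have "\<forall>y. q differentiable (at y)"
    unfolding q_def using has_derivative_quadratic_form[OF assms(1)] by (blast intro: differentiableI)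
  from norm_grad_w_sq[OF this]
  have "(norm (grad_w q u (m, C)))\<^sup>2
      = (norm (M *v (m - zbar) + (M ** C) *v u))\<^sup>2 * (1 + (norm u)\<^sup>2)" for u
    by (simp only: q_def grad_quadratic_form[OF assms(1)] matrix_vector_Tw_diff)
  then show ?thesis
    by (simp only: nn_integral_standardized_norm_affine_sq_weight[OF assms(2,3)])
qed

lemma quadratic_form_extremal:
  fixes M :: "real^'n^'n" and z0 :: "real^'n"
  assumes "sym_mat M"
  shows "let q = (\<lambda>z. (1/2) * ((z - z0) \<bullet> (M *v (z - z0)))) in
            (\<forall>y. q differentiable (at y)) \<and> matrix_smooth M q \<and> grad q z0 = 0 \<and>
            (\<forall>(s :: (real^'n) measure) \<kappa> (m :: real^'n) (C :: real^'n^'n).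
               standardized s \<and> fourth_moment s \<kappa> \<longrightarrow>
               (\<integral>\<^sup>+ u. ennreal ((norm (grad_w q u (m, C)))\<^sup>2) \<partial>s)
                 = ennreal ((real CARD('n) + 1) * (norm (M *v (m - z0)))\<^sup>2
                     + (real CARD('n) + \<kappa>) * (frob_norm (M ** C))\<^sup>2))"
  unfolding Let_def
proof (intro conjI)
  show "\<forall>y. (\<lambda>z. (1/2) * ((z - z0) \<bullet> (M *v (z - z0)))) differentiable (at y)"
    using has_derivative_quadratic_form[OF assms] by (blast intro: differentiableI)
  show "matrix_smooth M (\<lambda>z. (1/2) * ((z - z0) \<bullet> (M *v (z - z0))))"
    unfolding matrix_smooth_def grad_quadratic_form[OF assms]
    by (simp add: matrix_vector_mult_diff_distrib[symmetric])
  show "grad (\<lambda>z. (1/2) * ((z - z0) \<bullet> (M *v (z - z0)))) z0 = 0"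
    unfolding grad_quadratic_form[OF assms] by simp
qed (blast intro: quadratic_form_attains_bound[OF assms])

theorem theorem2:
  fixes M :: "real^'n^'n" and f :: "real^'n \<Rightarrow> real" and zbar :: "real^'n"
    and s :: "(real^'n) measure" and \<kappa> :: real and m :: "real^'n" and C :: "real^'n^'n"
  assumes "sym_mat M"
    and "\<forall>y. f differentiable (at y)"
    and "matrix_smooth M f"
    and "grad f zbar = 0"
    and "standardized s"
    and "fourth_moment s \<kappa>"
  shows "(\<integral>\<^sup>+ u. ennreal ((norm (grad_w f u (m, C)))\<^sup>2) \<partial>s)
           \<le> ennreal ((real CARD('n) + 1) * (norm (M *v (m - zbar)))\<^sup>2
                     + (real CARD('n) + \<kappa>) * (frob_norm (M ** C))\<^sup>2)
     \<and> (\<forall>(M' :: real^'n^'n) (z0 :: real^'n). sym_mat M' \<longrightarrow>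
          (let q = (\<lambda>z. (1/2) * ((z - z0) \<bullet> (M' *v (z - z0)))) in
            (\<forall>y. q differentiable (at y)) \<and> matrix_smooth M' q \<and> grad q z0 = 0 \<and>
            (\<forall>(s' :: (real^'n) measure) \<kappa>' (m' :: real^'n) (C' :: real^'n^'n).
               standardized s' \<and> fourth_moment s' \<kappa>' \<longrightarrow>
               (\<integral>\<^sup>+ u. ennreal ((norm (grad_w q u (m', C')))\<^sup>2) \<partial>s')
                 = ennreal ((real CARD('n) + 1) * (norm (M' *v (m' - z0)))\<^sup>2
                     + (real CARD('n) + \<kappa>') * (frob_norm (M' ** C'))\<^sup>2))))"
  by (intro conjI allI impI quadratic_form_extremal nn_integral_grad_w_sq_le[OF assms(2-6)])

end
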